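(* Let $\mathbb{K}$ be a field, $q\in\mathbb{K}^*$ not a root of unity, $n\geq 3$, and $R=\mathcal{O}_q(M_n)$. Let $\sigma$ be a $\mathbb{K}$-algebra automorphism of $R$ such that there exist nonzero scalars $\lambda_{i,\alpha}\in\mathbb{K}^*$ ($1\le i,\alpha\le n$) with $\sigma(Y_{i,\alpha})-\lambda_{i,\alpha}Y_{i,\alpha}\in R_{\geq 2}$ for all $(i,\alpha)$. Then there exists a torus automorphism $\sigma_h$ of $R$ such that $\sigma_h\circ\sigma(Y_{i,\alpha})-Y_{i,\alpha}\in R_{\geq 2}$ for all $(i,\alpha)$.
   Context: $\mathcal{O}_q(M_n)$ is the $\mathbb{K}$-algebra generated by $Y_{i,\alpha}$, $1\le i,\alpha\le n$, subject to: $Y_{i,\beta}Y_{i,\alpha}=q^{-1}Y_{i,\alpha}Y_{i,\beta}$ for $\alpha<\beta$; $Y_{j,\alpha}Y_{i,\alpha}=q^{-1}Y_{i,\alpha}Y_{j,\alpha}$ for $i<j$; $Y_{j,\beta}Y_{i,\alpha}=Y_{i,\alpha}Y_{j,\beta}$ for $i<j$, $\alpha>\beta$; $Y_{j,\beta}Y_{i,\alpha}=Y_{i,\alpha}Y_{j,\beta}-(q-q^{-1})Y_{i,\beta}Y_{j,\alpha}$ for $i<j$, $\alpha<\beta$. It is $\mathbb{N}$-graded $R=\bigoplus_{i\in\mathbb{N}}R_i$ with each $Y_{i,\alpha}$ of degree 1, and $R_{\geq d}:=\bigoplus_{i\ge d}R_i$. For $h=(a_1,\dots,a_n,b_1,\dots,b_{n-1})\in(\mathbb{K}^*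 )^{2n-1}$, the torus automorphism $\sigma_h$ is defined by $\sigma_h(Y_{i,\alpha})=a_ib_\alpha Y_{i,\alpha}$ if $\alpha<n$ and $\sigma_h(Y_{i,n})=a_iY_{i,n}$; the torus automorphisms form a subgroup $\mathcal{H}$ of $\mathrm{Aut}(R)$. *)

theory Defs
  imports Main
begin

text \<open>Free associative K-algebra on generators Y(i,alpha) (pairs of naturals):
  an element is a function from words (lists of generators) to coefficients.\<close>

type_synonym 'k fa = "(nat \<times> nat) list \<Rightarrow> 'k"

definition fa_carrier :: "nat \<Rightarrow> ('k::field) fa set" where
  "fa_carrier n = {f. finite {w. f w \<noteq> 0} \<and>
     (\<forall>w. f w \<noteq> 0 \<longrightarrow> set w \<subseteq> {1..n} \<times> {1..n})}"

definition fa_add :: "('k::field) fa \<Rightarrow> 'k fa \<Rightarrow> 'k fa" where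
  "fa_add f g = (\<lambda>w. f w + g w)"

definition fa_sub :: "('k::field) fa \<Rightarrow> 'k fa \<Rightarrow> 'k fa" where
  "fa_sub f g = (\<lambda>w. f w - g w)"

definition fa_smult :: "'k::field \<Rightarrow> 'k fa \<Rightarrow> 'k fa" where
  "fa_smult c f = (\<lambda>w. c * f w)"

definition fa_mult :: "('k::field) fa \<Rightarrow> 'k fa \<Rightarrow> 'k fa" where
  "fa_mult f g = (\<lambda>w. \<Sum>i\<in>{0..length w}. f (take i w) * g (drop i w))"

definition fa_one :: "('k::field) fa" where
  "fa_one = (\<lambda>w. if w = [] then 1 else 0)"

definition mon :: "(nat \<times> nat) list \<Rightarrow> ('k::field) fa" where
  "mon u = (\<lambda>w. if w = u then 1 else 0)"

abbreviation gen :: "nat \<Rightarrow> nat \<Rightarrow> ('k::field) fa" where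
  "gen i a \<equiv> mon [(i, a)]"

text \<open>Unique algebra endomorphism of the free algebra sending Y(x) to phi x.\<close>
fun wordprod :: "(nat \<times> nat \<Rightarrow> ('k::field) fa) \<Rightarrow> (nat \<times> nat) list \<Rightarrow> 'k fa" where
  "wordprod phi [] = fa_one"
| "wordprod phi (x # w) = fa_mult (phi x) (wordprod phi w)"

definition fa_ext :: "(nat \<times> nat \<Rightarrow> ('k::field) fa) \<Rightarrow> 'k fa \<Rightarrow> 'k fa" where
  "fa_ext phi f = (\<lambda>u. \<Sum>w\<in>{w. f w \<noteq> 0}. f w * wordprod phi w u)"

text \<open>Defining relations of O_q(M_n) (each relation written as lhs - rhs).\<close>
definition qrels :: "'k::field \<Rightarrow> nat \<Rightarrow> 'k fa set" where
  "qrels q n =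
     {fa_sub (mon [(i,b),(i,a)]) (fa_smult (inverse q) (mon [(i,a),(i,b)])) | i a b.
        i \<in> {1..n} \<and> a \<in> {1..n} \<and> b \<in> {1..n} \<and> a < b}
   \<union> {fa_sub (mon [(j,a),(i,a)]) (fa_smult (inverse q) (mon [(i,a),(j,a)])) | i j a.
        i \<in> {1..n} \<and> j \<in> {1..n} \<and> a \<in> {1..n} \<and> i < j}
   \<union> {fa_sub (mon [(j,b),(i,a)]) (mon [(i,a),(j,b)]) | i j a b.
        i \<in> {1..n} \<and> j \<in> {1..n} \<and> a \<in> {1..n} \<and> b \<in> {1..n} \<and> i < j \<and> a > b}
   \<union> {fa_sub (mon [(j,b),(i,a)])
         (fa_sub (mon [(i,a),(j,b)]) (fa_smult (q - inverse q) (mon [(i,b),(j,a)]))) | i j a b.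
        i \<in> {1..n} \<and> j \<in> {1..n} \<and> a \<in> {1..n} \<and> b \<in> {1..n} \<and> i < j \<and> a < b}"

text \<open>The two-sided ideal of the free algebra generated by the relations;
  O_q(M_n) = fa_carrier n / qideal q n.\<close>
inductive_set qideal :: "'k::field \<Rightarrow> nat \<Rightarrow> 'k fa set" for q n where
  rel: "r \<in> qrels q n \<Longrightarrow> r \<in> qideal q n"
| zero: "(\<lambda>w. 0) \<in> qideal q n"
| add: "a \<in> qideal q n \<Longrightarrow> b \<in> qideal q n \<Longrightarrow> fa_add a b \<in> qideal q n"
| smult: "a \<in> qideal q n \<Longrightarrow> fa_smult c a \<in> qideal q n"
| multl: "a \<in> qideal q n \<Longrightarrow> f \<in> fa_carrier n \<Longrightarrow> fa_mult f a \<in> qideal q n"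
| multr: "a \<in> qideal q n \<Longrightarrow> f \<in> fa_carrier n \<Longrightarrow> fa_mult a f \<in> qideal q n"

text \<open>Membership of the class of f in R_{>=2}: f is congruent modulo the ideal to
  an element of the free algebra supported on words of length >= 2.\<close>
definition in_Rge2 :: "'k::field \<Rightarrow> nat \<Rightarrow> 'k fa \<Rightarrow> bool" where
  "in_Rge2 q n f \<longleftrightarrow> (\<exists>r \<in> fa_carrier n. (\<forall>w. r w \<noteq> 0 \<longrightarrow> 2 \<le> length w) \<and>
      fa_sub f r \<in> qideal q n)"

text \<open>phi (images of the generators, as representatives in the free algebra)
  defines a K-algebra automorphism of O_q(M_n): the induced endomorphism of the
  free algebra preserves the ideal, and the induced map on the quotient is
  injective and surjective.\<close>
definition is_qaut :: "'k::field \<Rightarrow> nat \<Rightarrow> (nat \<times> nat \<Rightarrow> 'k fa) \<Rightarrow> bool" where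
  "is_qaut q n phi \<longleftrightarrow>
     (\<forall>i\<in>{1..n}. \<forall>a\<in>{1..n}. phi (i,a) \<in> fa_carrier n) \<and>
     (\<forall>f \<in> qideal q n. fa_ext phi f \<in> qideal q n) \<and>
     (\<forall>f \<in> fa_carrier n. fa_ext phi f \<in> qideal q n \<longrightarrow> f \<in> qideal q n) \<and>
     (\<forall>g \<in> fa_carrier n. \<exists>f \<in> fa_carrier n. fa_sub (fa_ext phi f) g \<in> qideal q n)"

text \<open>Generator images of the torus automorphism sigma_h, h = (a_1..a_n, b_1..b_{n-1}).\<close>
definition torus :: "nat \<Rightarrow> (nat \<Rightarrow> 'k::field) \<Rightarrow> (nat \<Rightarrow> 'k) \<Rightarrow> nat \<times> nat \<Rightarrow> 'k fa" where
  "torus n a b = (\<lambda>(i, al). fa_smult (if al < n then a i * b al else a i) (gen i al))"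

end

theory Submission
  imports Defs
begin

text \<open>Modulo R_{\<ge>2} the automorphism acts on degree one diagonally,
  \<sigma>(Y_{i\<alpha>}) = \<lambda>_{i\<alpha>} Y_{i\<alpha>}. The ideal of relations has no component of degree
  below 2, so its quadratic coefficients obey a linear identity that can be read off from
  the fourth relation. Applying \<sigma> to that relation and comparing quadratic coefficients
  yields \<lambda>_{j\<beta>} \<lambda>_{i\<alpha>} = \<lambda>_{i\<beta>} \<lambda>_{j\<alpha>} (this needs q^2 \<noteq> 1), so \<lambda> is a rank-one
  matrix, the inverse of a torus weight a_i b_\<alpha>. A torus automorphism rescales each
  monomial by its weight and preserves the ideal, because every relation is homogeneous in
  rows and in columns; hence it preserves R_{\<ge>2}, and the one with weights 1/\<lambda> normalises
  the linear part.\<close>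

lemma fa_mult_mon_mon: "fa_mult (mon u) (mon v) = (mon (u @ v) :: 'k::field fa)"
proof
  fix w :: "(nat \<times> nat) list"
  have "fa_mult (mon u) (mon v) w
      = (\<Sum>i\<in>{0..length w}. if i = length u then mon u (take i w) * mon v (drop i w) else 0)"
    unfolding fa_mult_def by (rule sum.cong) (auto simp: mon_def)
  also have "\<dots> = mon (u @ v) w"
    by (auto simp: mon_def append_eq_conv_conj) (metis append_take_drop_id)
  finally show "fa_mult (mon u) (mon v) w = mon (u @ v) w" .
qed

lemma fa_mult_one_right: "fa_mult f fa_one = f"
proof
  fix w :: "(nat \<times> nat) list"
  have "fa_mult f fa_one w = (\<Sum>i\<in>{0..length w}. if i = length w then f (take i w) else 0)"
    unfolding fa_mult_def by (rule sum.cong) (auto simp: fa_one_def)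
  then show "fa_mult f fa_one w = f w" by simp
qed

lemma fa_mult_smult_left: "fa_mult (fa_smult c f) g = fa_smult c (fa_mult f g)"
  by (simp add: fun_eq_iff fa_mult_def fa_smult_def sum_distrib_left mult.assoc)

lemma fa_mult_smult_right: "fa_mult f (fa_smult c g) = fa_smult c (fa_mult f g)"
  by (simp add: fun_eq_iff fa_mult_def fa_smult_def sum_distrib_left mult.left_commute)

lemma fa_mult_pair:
  "fa_mult f g [x, y] = f [] * g [x, y] + f [x] * g [y] + f [x, y] * g []"
  by (simp add: fa_mult_def numeral_2_eq_2 numeral_3_eq_3 add.assoc)

lemma qideal_low_degree_coeff:
  "a \<in> qideal q n \<Longrightarrow> length w < 2 \<Longrightarrow> a w = 0"
proof (induction arbitrary: w rule: qideal.induct)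
  case (rel r)
  then show ?case by (auto simp: qrels_def fa_sub_def fa_smult_def mon_def)
next
  case (multl a f)
  then show ?case by (cases w) (auto simp: fa_mult_def less_Suc_eq)
next
  case (multr a f)
  then show ?case by (cases w) (auto simp: fa_mult_def less_Suc_eq)
qed (auto simp: fa_add_def fa_smult_def)

lemma fa_mult_qideal_pair_left:
  "a \<in> qideal q n \<Longrightarrow> fa_mult a f [x, y] = a [x, y] * f []"
  by (simp add: fa_mult_pair qideal_low_degree_coeff)

lemma fa_mult_qideal_pair_right:
  "a \<in> qideal q n \<Longrightarrow> fa_mult f a [x, y] = f [] * a [x, y]"
  by (simp add: fa_mult_pair qideal_low_degree_coeff)

lemma qideal_pair_coeff_exchange:
  assumes "a \<in> qideal q n" "i < j" "al < be"
  shows "(q - inverse q) * a [(j,be),(i,al)] = a [(i,be),(j,al)] + a [(j,al),(i,be)]"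
  using assms(1)
proof (induction rule: qideal.induct)
  case (rel r)
  then show ?case using assms(2,3)
    by (auto simp: qrels_def fa_sub_def fa_smult_def mon_def)
next
  case (multl a f)
  then show ?case by (simp add: fa_mult_qideal_pair_right algebra_simps)
next
  case (multr a f)
  then show ?case by (simp add: fa_mult_qideal_pair_left algebra_simps)
qed (auto simp: fa_add_def fa_smult_def algebra_simps)

definition word_weight :: "(nat \<times> nat \<Rightarrow> 'k::field) \<Rightarrow> (nat \<times> nat) list \<Rightarrow> 'k" where
  "word_weight c w = prod_list (map c w)"

definition fa_reweight :: "(nat \<times> nat \<Rightarrow> 'k::field) \<Rightarrow> 'k fa \<Rightarrow> 'k fa" where
  "fa_reweight c f = (\<lambda>w. f w * word_weight c w)"

lemma fa_reweight_carrier: "f \<in> fa_carrier n \<Longrightarrow> fa_reweight c f \<in> fa_carrier n"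
  by (auto simp: fa_carrier_def fa_reweight_def elim: finite_subset[rotated])

lemma fa_reweight_sub: "fa_reweight c (fa_sub f g) = fa_sub (fa_reweight c f) (fa_reweight c g)"
  by (simp add: fun_eq_iff fa_reweight_def fa_sub_def algebra_simps)

lemma fa_reweight_mult:
  "fa_reweight c (fa_mult f g) = fa_mult (fa_reweight c f) (fa_reweight c g)"
proof
  fix w :: "(nat \<times> nat) list"
  have split: "word_weight c w = word_weight c (take i w) * word_weight c (drop i w)" for i
    by (metis append_take_drop_id map_append prod_list.append word_weight_def)
  show "fa_reweight c (fa_mult f g) w = fa_mult (fa_reweight c f) (fa_reweight c g) w"
    unfolding fa_reweight_def fa_mult_def sum_distrib_right
  proof (rule sum.cong[OF refl])
    fix i
    show "f (take i w) * g (drop i w) * word_weight c w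
        = f (take i w) * word_weight c (take i w) * (g (drop i w) * word_weight c (drop i w))"
      by (simp add: split[of i] mult_ac)
  qed
qed

lemma qrels_reweight:
  assumes "r \<in> qrels q n" "\<And>i al. c (i, al) = A i * B al"
  shows "\<exists>K. fa_reweight c r = fa_smult K r"
  using assms(1)
  by (auto simp: qrels_def fun_eq_iff fa_reweight_def fa_sub_def fa_smult_def mon_def
      word_weight_def assms(2) mult_ac)

lemma qideal_reweight:
  assumes "a \<in> qideal q n" "\<And>i al. c (i, al) = A i * B al"
  shows "fa_reweight c a \<in> qideal q n"
  using assms(1)
proof (induction rule: qideal.induct)
  case (rel r)
  then obtain K where "fa_reweight c r = fa_smult K r"
    using qrels_reweight assms(2) by blast
  then show ?case by (simp add: qideal.rel qideal.smult rel)
next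
  case zero
  then show ?case by (simp add: fa_reweight_def qideal.zero)
next
  case (add a b)
  then show ?case
    using qideal.add[OF add.IH] by (simp add: fa_reweight_def fa_add_def algebra_simps)
next
  case (smult a d)
  then show ?case
    using qideal.smult[OF smult.IH] by (simp add: fa_reweight_def fa_smult_def algebra_simps)
next
  case (multl a f)
  then show ?case
    by (simp add: fa_reweight_mult fa_reweight_carrier qideal.multl)
next
  case (multr a f)
  then show ?case
    by (simp add: fa_reweight_mult fa_reweight_carrier qideal.multr)
qed

lemma wordprod_diagonal:
  "wordprod (\<lambda>x. fa_smult (c x) (mon [x])) w = fa_smult (word_weight c w) (mon w)"
proof (induction w)
  case Nil
  show ?case by (simp add: fun_eq_iff fa_one_def fa_smult_def mon_def word_weight_def)
next
  case (Cons x w)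
  then show ?case
    by (simp add: fa_mult_smult_left fa_mult_smult_right fa_mult_mon_mon)
      (simp add: word_weight_def fun_eq_iff fa_smult_def)
qed

lemma fa_ext_diagonal:
  assumes "f \<in> fa_carrier n"
  shows "fa_ext (\<lambda>x. fa_smult (c x) (mon [x])) f = fa_reweight c f"
proof
  fix u
  have "finite {w. f w \<noteq> 0}" using assms by (simp add: fa_carrier_def)
  moreover have "fa_ext (\<lambda>x. fa_smult (c x) (mon [x])) f u
      = (\<Sum>w\<in>{w. f w \<noteq> 0}. if w = u then f u * word_weight c u else 0)"
    unfolding fa_ext_def wordprod_diagonal by (rule sum.cong) (auto simp: fa_smult_def mon_def)
  ultimately show "fa_ext (\<lambda>x. fa_smult (c x) (mon [x])) f u = fa_reweight c f u"
    by (simp add: fa_reweight_def)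
qed

lemma in_Rge2_low_degree_coeff:
  assumes "in_Rge2 q n f" "length w < 2"
  shows "f w = 0"
proof -
  obtain r where "\<forall>w. r w \<noteq> 0 \<longrightarrow> 2 \<le> length w" "fa_sub f r \<in> qideal q n"
    using assms(1) unfolding in_Rge2_def by blast
  then show ?thesis
    using qideal_low_degree_coeff[of "fa_sub f r" q n w] assms(2) by (force simp: fa_sub_def)
qed

lemma in_Rge2_reweight:
  assumes "in_Rge2 q n f" "\<And>i al. c (i, al) = A i * B al"
  shows "in_Rge2 q n (fa_reweight c f)"
proof -
  obtain r where r: "r \<in> fa_carrier n" "\<forall>w. r w \<noteq> 0 \<longrightarrow> 2 \<le> length w"
      "fa_sub f r \<in> qideal q n"
    using assms(1) unfolding in_Rge2_def by blast
  have "fa_sub (fa_reweight c f) (fa_reweight c r) \<in> qideal q n"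
    using qideal_reweight[where A = A and B = B, OF r(3) assms(2)] by (simp add: fa_reweight_sub)
  moreover have "\<forall>w. fa_reweight c r w \<noteq> 0 \<longrightarrow> 2 \<le> length w"
    using r(2) by (simp add: fa_reweight_def)
  ultimately show ?thesis
    unfolding in_Rge2_def using fa_reweight_carrier[OF r(1)] by blast
qed

lemma fa_mult_pair_of_linear_leading:
  assumes "in_Rge2 q n (fa_sub f (fa_smult l (mon [x])))"
    and "in_Rge2 q n (fa_sub g (fa_smult m (mon [y])))"
  shows "fa_mult f g [s, t] = (if s = x \<and> t = y then l * m else 0)"
proof -
  have "f w = l * mon [x] w" "g w = m * mon [y] w" if "length w < 2" for w
    using in_Rge2_low_degree_coeff[OF assms(1) that] in_Rge2_low_degree_coeff[OF assms(2) that]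
    by (simp_all add: fa_sub_def fa_smult_def)
  then show ?thesis by (simp add: fa_mult_pair mon_def)
qed

lemma fa_ext_finite_support:
  assumes "finite S" "{w. f w \<noteq> 0} \<subseteq> S"
  shows "fa_ext phi f u = (\<Sum>w\<in>S. f w * wordprod phi w u)"
  unfolding fa_ext_def by (rule sum.mono_neutral_left) (use assms in auto)

lemma linear_leading_coeffs_cross_ratio:
  assumes q: "q - inverse q \<noteq> 0"
    and preserves: "\<forall>f\<in>qideal q n. fa_ext phi f \<in> qideal q n"
    and linear: "\<And>x. x \<in> {1..n} \<times> {1..n} \<Longrightarrow>
                   in_Rge2 q n (fa_sub (phi x) (fa_smult (lam x) (mon [x])))"
    and range: "i \<in> {1..n}" "j \<in> {1..n}" "al \<in> {1..n}" "be \<in> {1..n}"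
    and less: "i < j" "al < be"
  shows "lam (j, be) * lam (i, al) = lam (i, be) * lam (j, al)"
proof -
  define r where "r = fa_sub (mon [(j,be),(i,al)])
      (fa_sub (mon [(i,al),(j,be)]) (fa_smult (q - inverse q) (mon [(i,be),(j,al)])))"
  have "r \<in> qrels q n"
    unfolding qrels_def r_def using range less by blast
  then have image: "fa_ext phi r \<in> qideal q n"
    using preserves qideal.rel by blast
  define S where "S = {[(j,be),(i,al)], [(i,al),(j,be)], [(i,be),(j,al)]}"
  have "r w = 0" if "w \<notin> S" for w
    using that by (simp add: S_def r_def fa_sub_def fa_smult_def mon_def)
  then have "fa_ext phi r u = (\<Sum>w\<in>S. r w * wordprod phi w u)" for u
    by (intro fa_ext_finite_support) (auto simp: S_def)
  then have image_coeff: "fa_ext phi r u = fa_mult (phi (j,be)) (phi (i,al)) u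
      - fa_mult (phi (i,al)) (phi (j,be)) u + (q - inverse q) * fa_mult (phi (i,be)) (phi (j,al)) u"
    for u using less by (simp add: S_def r_def fa_sub_def fa_smult_def mon_def fa_mult_one_right)
  have products: "fa_mult (phi x) (phi y) [s, t] = (if s = x \<and> t = y then lam x * lam y else 0)"
    if "x \<in> {1..n} \<times> {1..n}" "y \<in> {1..n} \<times> {1..n}" for x y s t
    by (rule fa_mult_pair_of_linear_leading[OF linear linear]) (use that in auto)
  have "(q - inverse q) * (lam (j, be) * lam (i, al)) = (q - inverse q) * (lam (i, be) * lam (j, al))"
    using range less qideal_pair_coeff_exchange[OF image less]
    by (simp add: image_coeff products)
  then show ?thesis using q by simp
qed

lemma cross_ratio_rank_one:
  fixes lam :: "nat \<times> nat \<Rightarrow> 'k::comm_semiring_1"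
  assumes cross: "\<And>i j al be. i \<in> {1..n} \<Longrightarrow> j \<in> {1..n} \<Longrightarrow> al \<in> {1..n} \<Longrightarrow> be \<in> {1..n}
      \<Longrightarrow> i < j \<Longrightarrow> al < be \<Longrightarrow> lam (j, be) * lam (i, al) = lam (i, be) * lam (j, al)"
    and "i \<in> {1..n}" "al \<in> {1..n}"
  shows "lam (i, al) * lam (1, n) = lam (i, n) * lam (1, al)"
proof (cases "i = 1 \<or> al = n")
  case False
  with assms(2,3) have "1 \<in> {1..n}" "n \<in> {1..n}" "1 < i" "al < n" by auto
  from cross[OF this(1) assms(2,3) this(2-4)] show ?thesis by (simp add: mult.commute)
qed (auto simp: mult.commute)

definition torus_weight :: "nat \<Rightarrow> (nat \<Rightarrow> 'k::field) \<Rightarrow> (nat \<Rightarrow> 'k) \<Rightarrow> nat \<times> nat \<Rightarrow> 'k" where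
  "torus_weight n a b = (\<lambda>(i, al). a i * (if al < n then b al else 1))"

lemma torus_eq_diagonal: "torus n a b = (\<lambda>x. fa_smult (torus_weight n a b x) (mon [x]))"
  by (auto simp: torus_def torus_weight_def fun_eq_iff)

lemma in_Rge2_torus_normalization:
  assumes "in_Rge2 q n (fa_sub f (fa_smult l (mon [x])))" "f \<in> fa_carrier n"
    and "torus_weight n a b x * l = 1"
  shows "in_Rge2 q n (fa_sub (fa_ext (torus n a b) f) (mon [x]))"
proof -
  let ?c = "torus_weight n a b"
  have weight: "?c (i, al) = a i * (if al < n then b al else 1)" for i al
    by (simp add: torus_weight_def)
  have "fa_sub (fa_ext (torus n a b) f) (mon [x]) = fa_reweight ?c (fa_sub f (fa_smult l (mon [x])))"
    unfolding torus_eq_diagonal fa_ext_diagonal[OF assms(2)] using assms(3)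
    by (auto simp: fun_eq_iff fa_reweight_def fa_sub_def fa_smult_def mon_def word_weight_def
        algebra_simps)
  moreover have "in_Rge2 q n (fa_reweight ?c (fa_sub f (fa_smult l (mon [x]))))"
    using weight by (rule in_Rge2_reweight[OF assms(1)])
  ultimately show ?thesis by simp
qed

lemma q_minus_inverse_nonzero:
  fixes q :: "'k::field"
  assumes "q \<noteq> 0" "q ^ 2 \<noteq> 1"
  shows "q - inverse q \<noteq> 0"
  using assms by (auto simp: field_simps power2_eq_square)

theorem lemma1p4:
  fixes q :: "'k::field" and n :: nat
    and phi :: "nat \<times> nat \<Rightarrow> 'k fa" and lam :: "nat \<times> nat \<Rightarrow> 'k"
  assumes "q \<noteq> 0" and "\<forall>m::nat. m > 0 \<longrightarrow> q ^ m \<noteq> 1" and "n \<ge> 3"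
    and "is_qaut q n phi"
    and "\<forall>i\<in>{1..n}. \<forall>al\<in>{1..n}. lam (i, al) \<noteq> 0 \<and>
           in_Rge2 q n (fa_sub (phi (i, al)) (fa_smult (lam (i, al)) (gen i al)))"
  shows "\<exists>a b. (\<forall>i\<in>{1..n}. a i \<noteq> 0) \<and> (\<forall>al\<in>{1..n-1}. b al \<noteq> 0) \<and>
           (\<forall>i\<in>{1..n}. \<forall>al\<in>{1..n}.
              in_Rge2 q n (fa_sub (fa_ext (torus n a b) (phi (i, al))) (gen i al)))"
proof -
  have q: "q - inverse q \<noteq> 0"
    using assms(1,2) by (intro q_minus_inverse_nonzero) auto
  have cross: "lam (j, be) * lam (i, al) = lam (i, be) * lam (j, al)"
    if "i \<in> {1..n}" "j \<in> {1..n}" "al \<in> {1..n}" "be \<in> {1..n}" "i < j" "al < be" for i j al be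
    using linear_leading_coeffs_cross_ratio[OF q _ _ that] assms(4,5)
    unfolding is_qaut_def by blast
  have corners: "1 \<in> {1..n}" "n \<in> {1..n}" using assms(3) by auto
  define a where "a i = inverse (lam (i, n))" for i
  define b where "b al = lam (1, n) * inverse (lam (1, al))" for al
  show ?thesis
  proof (intro exI conjI ballI)
    fix i al assume grid: "i \<in> {1..n}" "al \<in> {1..n}"
    have "lam (i, al) * lam (1, n) = lam (i, n) * lam (1, al)"
      using cross grid by (rule cross_ratio_rank_one)
    then have "torus_weight n a b (i, al) * lam (i, al) = 1"
      using grid corners assms(5) by (auto simp: torus_weight_def a_def b_def field_simps)
    moreover have "phi (i, al) \<in> fa_carrier n"
      using grid assms(4) unfolding is_qaut_def by blast
    moreover have "in_Rge2 q n (fa_sub (phi (i, al)) (fa_smult (lam (i, al)) (gen i al)))"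
      using grid assms(5) by blast
    ultimately show "in_Rge2 q n (fa_sub (fa_ext (torus n a b) (phi (i, al))) (gen i al))"
      by (intro in_Rge2_torus_normalization)
  qed (use assms(5) corners in \<open>auto simp: a_def b_def\<close>)
qed

end
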